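(* Let $G=\operatorname{SL}(V)$ with $\dim V=n\ge2$. Then: (i) $b_V$ is alternating; (ii) if $n$ is even, $b_V$ is non-degenerate and $\operatorname{Ker}\psi_V=\langle\gamma_V\rangle^\perp$; (iii) if $n$ is odd, the radical of $b_V$ is $\langle\gamma_V\rangle$ and $V\otimes V^*=\operatorname{Ker}\psi_V\oplus\langle\gamma_V\rangle$; (iv) $\langle\gamma_V\rangle^\perp/\langle\gamma_V\rangle\cong L_G(\varpi_1+\varpi_{n-1})$ as $G$-modules.
   Context: $K$ is an algebraically closed field of characteristic 2. $\psi_V:V\otimes V^*\to K$ is $\psi_V(v\otimes f)=f(v)$. The form $b_V$ on $V\otimes V^*$ is $b_V(v\otimes f,v'\otimes f')=f(v')f'(v)+f(v)f'(v')$, which is $G$-invariant. For a basis $e_1,\dots,e_n$ of $V$ with dual basis $e_i^*$, $\gamma_V=\sum_i e_i\otimes e_i^*$ (independent of the basis). Perps are with respect to $b_V$. $L_G(\lambda)$ is the irreducible rational $G$-module of highest weight $\lambda$, fundamental weights labelled as in Bourbaki. *)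

theory Defs
  imports "HOL-Analysis.Analysis" "HOL-Computational_Algebra.Polynomial"
begin

text \<open>Coordinates: V = K^n with standard basis e_i indexed by the finite
linearly ordered type 'n; V* has the dual basis e_i^*.  An element of
V \<otimes> V^* is its coefficient matrix X, i.e. X = sum_{i,j} X_ij e_i \<otimes> e_j^*.\<close>

definition char2 :: "'k::field itself \<Rightarrow> bool" where
  "char2 _ \<longleftrightarrow> (1::'k) + 1 = 0"

definition alg_closed :: "'k::field itself \<Rightarrow> bool" where
  "alg_closed _ \<longleftrightarrow> (\<forall>p::'k poly. degree p \<ge> 1 \<longrightarrow> (\<exists>x. poly p x = 0))"

text \<open>The simple tensor v \<otimes> f (f given by its coordinates in the dual basis).\<close>
definition stensor :: "'k::field^'n \<Rightarrow> 'k^'n \<Rightarrow> 'k^'n^'n" where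
  "stensor v f = (\<chi> i j. v$i * f$j)"

definition tsmult :: "'k::field \<Rightarrow> 'k^'n^'n \<Rightarrow> 'k^'n^'n" where
  "tsmult c X = (\<chi> i j. c * X$i$j)"

text \<open>psi_V: bilinear extension of psi_V(e_i \<otimes> e_j^*) = e_j^*(e_i).\<close>
definition psiV :: "'k::field^'n^'n \<Rightarrow> 'k" where
  "psiV X = (\<Sum>i\<in>UNIV. \<Sum>j\<in>UNIV. X$i$j * of_bool (i = j))"

text \<open>b_V: bilinear extension of
 b(e_i\<otimes>e_j^*, e_k\<otimes>e_l^*) = e_j^*(e_k) e_l^*(e_i) + e_j^*(e_i) e_l^*(e_k).\<close>
definition bV :: "'k::field^'n^'n \<Rightarrow> 'k^'n^'n \<Rightarrow> 'k" where
  "bV X Y = (\<Sum>i\<in>UNIV. \<Sum>j\<in>UNIV. \<Sum>k\<in>UNIV. \<Sum>l\<in>UNIV.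
      X$i$j * Y$k$l * (of_bool (j = k) * of_bool (l = i) + of_bool (j = i) * of_bool (l = k)))"

definition gammaV :: "'k::field^'n^'n" where
  "gammaV = (\<Sum>i\<in>UNIV. stensor (axis i 1) (axis i 1))"

definition span_gamma :: "('k::field^'n^'n) set" where
  "span_gamma = {tsmult c gammaV | c. True}"

definition perp :: "('k::field^'n^'n) set \<Rightarrow> ('k^'n^'n) set" where
  "perp S = {X. \<forall>Y\<in>S. bV X Y = 0}"

definition radical :: "('k::field^'n^'n) set" where
  "radical = {X. \<forall>Y. bV X Y = 0}"

definition SL :: "('k::field^'n^'n) set" where
  "SL = {g. det g = 1}"

text \<open>Action of g on V \<otimes> V^*: g.(v \<otimes> f) = gv \<otimes> (f \<circ> g^{-1}), i.e. X \<mapsto> g X g^{-1}.\<close>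
definition act :: "'k::field^'n^'n \<Rightarrow> 'k^'n^'n \<Rightarrow> 'k^'n^'n" where
  "act g X = g ** X ** matrix_inv g"

definition Gsubmodule :: "('k::field^'n^'n) set \<Rightarrow> bool" where
  "Gsubmodule S \<longleftrightarrow> 0 \<in> S \<and> (\<forall>x\<in>S. \<forall>y\<in>S. x + y \<in> S) \<and>
     (\<forall>c. \<forall>x\<in>S. tsmult c x \<in> S) \<and> (\<forall>g\<in>SL. \<forall>x\<in>S. act g x \<in> S)"

text \<open>Standard Borel: upper triangular matrices; its unipotent radical and the
diagonal maximal torus of SL(V).\<close>
definition unitri :: "('k::field^('n::{finite,linorder})^('n::{finite,linorder})) set" where
  "unitri = {u. (\<forall>i. u$i$i = 1) \<and> (\<forall>i j. j < i \<longrightarrow> u$i$j = 0)}"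

definition torus :: "('k::field^'n^'n) set" where
  "torus = {t \<in> SL. \<forall>i j. i \<noteq> j \<longrightarrow> t$i$j = 0}"

text \<open>The weight \<varpi>_1 + \<varpi>_{n-1}: diag(t_1,...,t_n) \<mapsto> t_1 t_n^{-1}.\<close>
definition weight_w1_wn1 :: "'k::field^('n::{finite,linorder})^('n::{finite,linorder}) \<Rightarrow> 'k" where
  "weight_w1_wn1 t = t$(Min UNIV)$(Min UNIV) * inverse (t$(Max UNIV)$(Max UNIV))"

text \<open>The G-module W/U (U \<subseteq> W G-submodules) is the irreducible module L_G(\<lambda>):
it is nonzero and irreducible (no G-submodule strictly between U and W),
and has a highest weight vector of weight \<lambda> (a vector fixed by the unipotent
radical of the Borel on which the torus acts by \<lambda>).\<close>
definition subquot_is_L :: "('k::field^('n::{finite,linorder})^('n::{finite,linorder})) set \<Rightarrow> ('k^('n::{finite,linorder})^('n::{finite,linorder})) set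
     \<Rightarrow> ('k^('n::{finite,linorder})^('n::{finite,linorder}) \<Rightarrow> 'k) \<Rightarrow> bool" where
  "subquot_is_L U W wt \<longleftrightarrow> Gsubmodule U \<and> Gsubmodule W \<and> U \<subset> W \<and>
     (\<forall>S. Gsubmodule S \<and> U \<subseteq> S \<and> S \<subseteq> W \<longrightarrow> S = U \<or> S = W) \<and>
     (\<exists>v\<in>W. v \<notin> U \<and> (\<forall>u\<in>unitri. act u v - v \<in> U) \<and>
        (\<forall>t\<in>torus. act t v - tsmult (wt t) v \<in> U))"

end

theory Submission
  imports Defs
begin

text \<open>In coordinates \<open>V \<otimes> V\<^sup>*\<close> is the space of \<open>n \<times> n\<close> matrices, \<open>\<psi>\<^sub>V\<close> is the trace,
\<open>b\<^sub>V(X, Y) = tr (X Y) + tr X tr Y\<close> and \<open>\<gamma>\<^sub>V\<close> is the identity. In characteristic 2 both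
\<open>tr (X\<^sup>2)\<close> and \<open>(tr X)\<^sup>2\<close> equal \<open>\<Sum> X\<^sub>i\<^sub>i\<^sup>2\<close>, so \<open>b\<^sub>V\<close> is alternating. Pairing with matrix
units shows that the radical consists of scalar matrices, and
\<open>\<langle>\<gamma>\<rangle>\<^sup>\<perp> = {X. (1 + n) tr X = 0}\<close>; the parity of \<open>n\<close> then decides (ii) and (iii).

For (iv), conjugation by a transvection \<open>I + a E\<^sub>i\<^sub>j\<close> sends \<open>X\<close> to
\<open>X + a [E\<^sub>i\<^sub>j, X] - a\<^sup>2 E\<^sub>i\<^sub>j X E\<^sub>i\<^sub>j\<close>, so a submodule is closed under both operations as soon
as the field has an element outside \<open>{0, 1}\<close>. A non-scalar element of a submodule then
yields a matrix unit, commutators yield all \<open>E\<^sub>p\<^sub>q\<close> (\<open>p \<noteq> q\<close>) and all \<open>E\<^sub>p\<^sub>p - E\<^sub>q\<^sub>q\<close>,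
hence every trace-zero matrix, which together with \<open>\<langle>\<gamma>\<rangle>\<close> spans \<open>\<langle>\<gamma>\<rangle>\<^sup>\<perp>\<close>.
Finally \<open>E\<^sub>1\<^sub>n\<close> is fixed by the unitriangular group and has weight \<open>\<varpi>\<^sub>1 + \<varpi>\<^sub>n\<^sub>-\<^sub>1\<close>.\<close>

lemma if_zero_simps:
  "x * of_bool P = (if P then x else 0)"
  "of_bool P * x = (if P then x else 0)"
  "x * (if P then y else 0) = (if P then x * y else 0)"
  "(if P then y else 0) * x = (if P then y * x else 0)"
  "(if P \<and> Q then y else 0) = (if P then if Q then y else 0 else 0)"
  "(\<Sum>k\<in>A. if P then f k else 0) = (if P then sum f A else 0)"
  for x y :: "'a::semiring_1"
  by simp_all

subsection \<open>Characteristic 2\<close>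

lemma char2_add_self:
  assumes "char2 TYPE('k::field)"
  shows "(x::'k) + x = 0"
  using assms unfolding char2_def by (metis distrib_left mult.right_neutral mult_zero_right)

lemma char2_uminus:
  assumes "char2 TYPE('k::field)"
  shows "- (x::'k) = x"
  using char2_add_self[OF assms, of x] by (simp add: add_eq_0_iff)

lemma char2_of_nat:
  assumes "char2 TYPE('k::field)"
  shows "(of_nat n::'k) = (if even n then 0 else 1)"
  by (induction n) (auto simp: char2_add_self[OF assms] add.commute)

lemma char2_sum_sum_symmetric:
  assumes "char2 TYPE('k::field)" and "finite A" and "\<And>i j. f i j = f j i"
  shows "(\<Sum>i\<in>A. \<Sum>j\<in>A. (f i j::'k)) = (\<Sum>i\<in>A. f i i)"
  using assms(2)
proof (induction A rule: finite_induct)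
  case (insert a A)
  have "(\<Sum>i\<in>insert a A. \<Sum>j\<in>insert a A. f i j) =
      f a a + ((\<Sum>j\<in>A. f a j) + (\<Sum>j\<in>A. f a j)) + (\<Sum>i\<in>A. \<Sum>j\<in>A. f i j)"
    using insert assms(3) by (simp add: sum.distrib algebra_simps)
  with insert show ?case by (simp add: char2_add_self[OF assms(1)])
qed simp

lemma alg_closed_exists_ne_0_1:
  assumes "alg_closed TYPE('k::field)"
  obtains w :: "'k::field" where "w \<noteq> 0" "w \<noteq> 1"
proof -
  have "degree [:-1, -1, 1::'k:] \<ge> 1" by simp
  then obtain w :: 'k where "poly [:-1, -1, 1:] w = 0"
    using assms unfolding alg_closed_def by blast
  then have "w * w - w - 1 = 0" by (simp add: algebra_simps)
  then have "w \<noteq> 0" "w \<noteq> 1" by auto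
  then show thesis by (rule that)
qed

subsection \<open>The form in coordinates\<close>

lemma psiV_eq_trace: "psiV X = trace X"
  unfolding psiV_def trace_def by (simp add: sum.delta')

lemma gammaV_eq_mat_1: "gammaV = mat 1"
  unfolding gammaV_def stensor_def by (simp add: vec_eq_iff mat_def axis_def if_zero_simps sum.delta)

lemma span_gamma_eq: "span_gamma = range (\<lambda>c. tsmult c (mat 1))"
  unfolding span_gamma_def gammaV_eq_mat_1 by auto

lemma bV_eq_trace: "bV X Y = trace (X ** Y) + trace X * trace Y"
  unfolding bV_def trace_def matrix_matrix_mult_def
  by (simp add: if_zero_simps distrib_left sum.distrib sum_product sum.delta')

lemma bV_commute: "bV X Y = bV Y X"
  unfolding bV_eq_trace trace_mul_sym[of X] by (simp add: mult.commute)

lemma bV_self_char2: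
  assumes "char2 TYPE('k::field)"
  shows "bV X X = (0::'k)"
proof -
  have "trace (X ** X) = (\<Sum>i\<in>UNIV. \<Sum>j\<in>UNIV. X$i$j * X$j$i)"
    unfolding trace_def matrix_matrix_mult_def by simp
  also have "\<dots> = (\<Sum>i\<in>UNIV. X$i$i * X$i$i)"
    by (rule char2_sum_sum_symmetric[OF assms]) (simp_all add: mult.commute)
  finally have "trace (X ** X) = (\<Sum>i\<in>UNIV. X$i$i * X$i$i)" .
  moreover have "trace X * trace X = (\<Sum>i\<in>UNIV. \<Sum>j\<in>UNIV. X$i$i * X$j$j)"
    unfolding trace_def sum_product ..
  moreover have "\<dots> = (\<Sum>i\<in>UNIV. X$i$i * X$i$i)"
    by (rule char2_sum_sum_symmetric[OF assms]) (simp_all add: mult.commute)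
  ultimately show ?thesis
    unfolding bV_eq_trace by (simp add: char2_add_self[OF assms])
qed

lemma trace_tsmult: "trace (tsmult c X) = c * trace X"
  unfolding trace_def tsmult_def by (simp add: sum_distrib_left)

lemma tsmult_mult:
  "A ** tsmult c B = tsmult c (A ** B)" "tsmult c A ** B = tsmult c (A ** B)"
  by (simp_all add: vec_eq_iff matrix_matrix_mult_def tsmult_def sum_distrib_left algebra_simps)

lemma bV_scalar: "bV X (tsmult c (mat 1)) = c * (1 + of_nat CARD('n)) * trace X"
  for X :: "'k::field^'n::finite^'n"
  unfolding bV_eq_trace trace_tsmult trace_I tsmult_mult by (simp add: algebra_simps)

lemma perp_span_gamma:
  "perp (span_gamma::('k::field^'n::finite^'n) set) = {X. (1 + of_nat CARD('n)) * trace X = 0}"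
  unfolding perp_def span_gamma_eq by (auto simp: bV_scalar)

definition matrix_unit :: "'n::finite \<Rightarrow> 'n \<Rightarrow> 'k::field^'n^'n" where
  "matrix_unit i j = (\<chi> p q. if p = i \<and> q = j then 1 else 0)"

lemma matrix_unit_component: "matrix_unit i j $ p $ q = (if p = i \<and> q = j then 1 else 0)"
  by (simp add: matrix_unit_def)

lemma matrix_unit_mult_left: "(matrix_unit i j ** X)$p$q = (if p = i then X$j$q else 0)"
  unfolding matrix_unit_def matrix_matrix_mult_def by (simp add: if_zero_simps sum.delta)

lemma matrix_unit_mult_right: "(X ** matrix_unit i j)$p$q = (if q = j then X$p$i else 0)"
  unfolding matrix_unit_def matrix_matrix_mult_def by (simp add: if_zero_simps sum.delta')

lemma matrix_unit_mult:
  "matrix_unit i j ** matrix_unit k l = (if j = k then matrix_unit i l else 0)"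
  by (simp add: vec_eq_iff matrix_unit_mult_left) (simp add: matrix_unit_def)

lemma trace_matrix_unit: "trace (matrix_unit i j) = (if i = j then 1 else 0)"
  unfolding trace_def matrix_unit_def by (simp add: if_zero_simps)

lemma bV_matrix_unit: "bV X (matrix_unit q p) = X$p$q + (if p = q then trace X else 0)"
  unfolding bV_eq_trace trace_matrix_unit trace_def[of "_ ** _"] matrix_unit_mult_right
  by (simp add: if_zero_simps)

lemma radical_eq_scalar_char2:
  fixes X :: "'k::field^'n::finite^'n"
  assumes "char2 TYPE('k)" and "\<forall>Y. bV X Y = 0"
  shows "X = tsmult (trace X) (mat 1)"
proof -
  have "X$p$q = (if p = q then trace X else 0)" for p q
    using assms(2)[rule_format, of "matrix_unit q p"] char2_uminus[OF assms(1)]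
    unfolding bV_matrix_unit by (auto split: if_splits simp: add_eq_0_iff)
  then show ?thesis by (simp add: vec_eq_iff tsmult_def mat_def)
qed

lemma bV_nondegenerate_even:
  fixes X :: "'k::field^'n::finite^'n"
  assumes "char2 TYPE('k)" and "even CARD('n)" and "\<forall>Y. bV X Y = 0"
  shows "X = 0"
proof -
  have "trace X = trace X * of_nat CARD('n)"
    using radical_eq_scalar_char2[OF assms(1,3)] by (metis trace_I trace_tsmult mult.commute)
  then have "trace X = 0" using char2_of_nat[OF assms(1)] assms(2) by simp
  then show ?thesis
    using radical_eq_scalar_char2[OF assms(1,3)] by (simp add: vec_eq_iff tsmult_def)
qed

lemma ker_psiV_eq_perp_even:
  assumes "char2 TYPE('k::field)" and "even CARD('n::finite)"
  shows "{X::'k^'n^'n. psiV X = 0} = perp span_gamma"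
  using assms unfolding perp_span_gamma psiV_eq_trace by (simp add: char2_of_nat)

lemma radical_eq_span_gamma_odd:
  assumes "char2 TYPE('k::field)" and "odd CARD('n::finite)"
  shows "(radical :: ('k^'n^'n) set) = span_gamma"
proof
  have "1 + of_nat CARD('n) = (0::'k)"
    using assms char2_add_self[OF assms(1), of 1] by (simp add: char2_of_nat)
  then show "span_gamma \<subseteq> (radical :: ('k^'n^'n) set)"
    unfolding radical_def span_gamma_eq by (auto simp: bV_commute[of "tsmult _ _"] bV_scalar)
  show "(radical :: ('k^'n^'n) set) \<subseteq> span_gamma"
    unfolding radical_def span_gamma_eq using radical_eq_scalar_char2[OF assms(1)] by blast
qed

lemma trace_scalar_odd:
  assumes "char2 TYPE('k::field)" and "odd CARD('n::finite)"
  shows "trace (tsmult c (mat 1) :: 'k^'n^'n) = c"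
  using assms by (simp add: trace_tsmult trace_I char2_of_nat)

lemma ker_psiV_inter_span_gamma_odd:
  assumes "char2 TYPE('k::field)" and "odd CARD('n::finite)"
  shows "{X::'k^'n^'n. psiV X = 0} \<inter> span_gamma = {0}"
proof -
  have "tsmult 0 (mat 1) = (0::'k^'n^'n)" "trace (0::'k^'n^'n) = 0"
    by (simp_all add: vec_eq_iff tsmult_def trace_def)
  then show ?thesis
    unfolding span_gamma_eq psiV_eq_trace using trace_scalar_odd[OF assms] by auto
qed

lemma ker_psiV_plus_span_gamma_odd:
  assumes "char2 TYPE('k::field)" and "odd CARD('n::finite)"
  shows "\<exists>X Y. psiV X = 0 \<and> Y \<in> span_gamma \<and> (Z::'k^'n^'n) = X + Y"
proof (intro exI conjI)
  let ?Y = "tsmult (trace Z) (mat 1) :: 'k^'n^'n"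
  show "psiV (Z - ?Y) = 0"
    unfolding psiV_eq_trace trace_sub trace_scalar_odd[OF assms] by simp
  show "?Y \<in> span_gamma" unfolding span_gamma_eq by simp
qed simp

subsection \<open>The action of \<open>SL(V)\<close>\<close>

lemma act_eq_conj:
  fixes g :: "'k::field^'n::finite^'n"
  assumes "g ** h = mat 1"
  shows "act g X = g ** X ** h"
proof -
  have hg: "h ** g = mat 1" using assms matrix_left_right_inverse by blast
  let ?C = "matrix_inv g"
  have C: "g ** ?C = mat 1 \<and> ?C ** g = mat 1"
    unfolding matrix_inv_def by (rule someI[of _ h]) (use assms hg in blast)
  have "?C = (?C ** g) ** h" using assms by (simp flip: matrix_mul_assoc)
  then have "?C = h" using C by simp
  then show ?thesis unfolding act_def by (simp add: matrix_mul_assoc)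
qed

lemma obtain_inverse_det_nonzero:
  fixes g :: "'k::field^'n::finite^'n"
  assumes "det g \<noteq> 0"
  obtains h where "g ** h = mat 1" "h ** g = mat 1"
  using assms invertible_det_nz unfolding invertible_def by blast

lemma act_scalar:
  fixes g :: "'k::field^'n::finite^'n"
  assumes "det g \<noteq> 0"
  shows "act g (tsmult c (mat 1)) = tsmult c (mat 1)"
proof -
  obtain h where "g ** h = mat 1" using obtain_inverse_det_nonzero[OF assms] .
  then show ?thesis by (simp add: act_eq_conj tsmult_mult)
qed

lemma trace_act:
  fixes g :: "'k::field^'n::finite^'n"
  assumes "det g \<noteq> 0"
  shows "trace (act g X) = trace X"
proof -
  obtain h where gh: "g ** h = mat 1" and hg: "h ** g = mat 1"
    using obtain_inverse_det_nonzero[OF assms] .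
  have "trace (g ** X ** h) = trace (h ** g ** X)"
    by (metis trace_mul_sym matrix_mul_assoc)
  then show ?thesis using hg by (simp add: act_eq_conj[OF gh])
qed

lemma
  assumes "Gsubmodule S"
  shows Gsubmodule_zero: "0 \<in> S"
    and Gsubmodule_add: "x \<in> S \<Longrightarrow> y \<in> S \<Longrightarrow> x + y \<in> S"
    and Gsubmodule_tsmult: "x \<in> S \<Longrightarrow> tsmult c x \<in> S"
    and Gsubmodule_act: "g \<in> SL \<Longrightarrow> x \<in> S \<Longrightarrow> act g x \<in> S"
  using assms unfolding Gsubmodule_def by blast+

lemma Gsubmodule_diff:
  assumes "Gsubmodule S" and "x \<in> S" and "y \<in> S"
  shows "x - y \<in> S"
proof -
  have "x - y = x + tsmult (-1) y" by (simp add: vec_eq_iff tsmult_def)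
  then show ?thesis using assms Gsubmodule_add Gsubmodule_tsmult by metis
qed

lemma Gsubmodule_sum:
  assumes "Gsubmodule S" and "\<And>x. x \<in> A \<Longrightarrow> f x \<in> S"
  shows "sum f A \<in> S"
  using assms(2)
  by (induction A rule: infinite_finite_induct)
    (auto intro: Gsubmodule_zero[OF assms(1)] Gsubmodule_add[OF assms(1)])

lemma Gsubmodule_span_gamma: "Gsubmodule (span_gamma :: ('k::field^'n::finite^'n) set)"
proof -
  have "tsmult a (mat 1) + tsmult b (mat 1) = tsmult (a + b) (mat 1 :: 'k^'n^'n)"
    "tsmult c (tsmult a (mat 1)) = tsmult (c * a) (mat 1 :: 'k^'n^'n)"
    "0 = tsmult 0 (mat 1 :: 'k^'n^'n)" for a b c
    by (simp_all add: vec_eq_iff tsmult_def algebra_simps)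
  then show ?thesis
    unfolding Gsubmodule_def span_gamma_eq SL_def by (auto simp: act_scalar)
qed

lemma Gsubmodule_trace_kernel: "Gsubmodule {X :: 'k::field^'n::finite^'n. m * trace X = 0}"
  unfolding Gsubmodule_def
  by (auto simp: trace_add trace_tsmult trace_act SL_def algebra_simps trace_def[of 0])

subsection \<open>Transvections\<close>

definition transvection :: "'n::finite \<Rightarrow> 'n \<Rightarrow> 'k::field \<Rightarrow> 'k^'n^'n" where
  "transvection i j a = mat 1 + tsmult a (matrix_unit i j)"

lemma transvection_mult_left:
  "(transvection i j a ** X)$p$q = X$p$q + (if p = i then a * X$j$q else 0)"
  unfolding transvection_def matrix_matrix_mult_def matrix_unit_def
  by (simp add: mat_def tsmult_def distrib_right sum.distrib if_zero_simps sum.delta)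

lemma transvection_mult_right:
  "(X ** transvection i j a)$p$q = X$p$q + (if q = j then a * X$p$i else 0)"
  unfolding transvection_def matrix_matrix_mult_def matrix_unit_def
  by (simp add: mat_def tsmult_def distrib_left sum.distrib if_zero_simps sum.delta' mult.commute)

lemma transvection_component:
  "transvection i j a $ p $ q = (if p = q then 1 else 0) + (if p = i \<and> q = j then a else 0)"
  by (simp add: transvection_def tsmult_def matrix_unit_def mat_def)

lemma transvection_mult_neg:
  "i \<noteq> j \<Longrightarrow> transvection i j a ** transvection i j (-a) = mat 1"
  by (auto simp: vec_eq_iff transvection_mult_left transvection_component mat_def)

lemma transvection_SL:
  fixes i j :: "'n::finite" and a :: "'k::field"
  assumes "i \<noteq> j"
  shows "transvection i j a \<in> SL"
proof -
  have "transvection i j a = (\<chi> k. if k = i then row i (mat 1) + a *s row j (mat 1) else row k (mat 1))"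
    using assms by (auto simp: vec_eq_iff transvection_def tsmult_def matrix_unit_def row_def mat_def)
  then have "det (transvection i j a) = det (mat 1 :: 'k^'n^'n)"
    by (simp only: det_row_operation[OF assms])
  then show ?thesis by (simp add: SL_def)
qed

lemma act_transvection:
  assumes "i \<noteq> j"
  shows "act (transvection i j a) X = X + tsmult a (matrix_unit i j ** X - X ** matrix_unit i j)
    - tsmult (a^2) (matrix_unit i j ** X ** matrix_unit i j)"
  unfolding act_eq_conj[OF transvection_mult_neg[OF assms]]
  by (simp add: vec_eq_iff transvection_mult_left transvection_mult_right
      matrix_unit_mult_left matrix_unit_mult_right tsmult_def power2_eq_square algebra_simps)

lemma sandwich_matrix_unit: "matrix_unit i j ** X ** matrix_unit i j = tsmult (X$j$i) (matrix_unit i j)"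
  by (simp add: vec_eq_iff matrix_unit_mult_left matrix_unit_mult_right tsmult_def)
    (simp add: matrix_unit_def)

lemma trace_zero_decomposition:
  fixes Z :: "'k::field^'n::finite^'n"
  assumes "trace Z = 0"
  shows "Z = (\<Sum>p\<in>UNIV. \<Sum>q\<in>UNIV - {p}. tsmult (Z$p$q) (matrix_unit p q))
           + (\<Sum>p\<in>UNIV. tsmult (Z$p$p) (matrix_unit p p - matrix_unit m m))"
proof -
  have "(\<Sum>p\<in>UNIV. \<Sum>q\<in>UNIV - {p}. tsmult (Z$p$q) (matrix_unit p q))$r$s
      = (if r = s then 0 else Z$r$s)" for r s
    by (simp add: tsmult_def matrix_unit_def if_zero_simps sum.delta)
  moreover have "(\<Sum>p\<in>UNIV. tsmult (Z$p$p) (matrix_unit p p - matrix_unit m m))$r$s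
      = (if r = s then Z$r$r else 0) - (if r = m \<and> s = m then trace Z else 0)" for r s
    by (simp add: tsmult_def matrix_unit_def right_diff_distrib sum_subtractf if_zero_simps
        sum.delta trace_def)
  ultimately show ?thesis using assms by (simp add: vec_eq_iff)
qed

locale SL_submodule =
  fixes S :: "('k::field^'n::finite^'n) set"
  assumes Gsubmodule: "Gsubmodule S"
    and exists_ne_0_1: "\<exists>w::'k. w \<noteq> 0 \<and> w \<noteq> 1"
begin

lemma commutator_sandwich_mem:
  assumes "X \<in> S" and "i \<noteq> j"
  shows "matrix_unit i j ** X - X ** matrix_unit i j \<in> S"
    and "matrix_unit i j ** X ** matrix_unit i j \<in> S"
proof -
  define A where "A = matrix_unit i j ** X - X ** matrix_unit i j"
  define B where "B = matrix_unit i j ** X ** matrix_unit i j"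
  define P where "P a = act (transvection i j a) X - X" for a
  have P_eq: "P a = tsmult a A - tsmult (a^2) B" for a
    unfolding P_def A_def B_def act_transvection[OF assms(2)] by (simp add: vec_eq_iff)
  have P_mem: "P a \<in> S" for a
    unfolding P_def using assms
    by (intro Gsubmodule_diff Gsubmodule_act Gsubmodule transvection_SL)
  txt \<open>\<open>P 1\<close> and \<open>P w\<close> with \<open>w \<notin> {0, 1}\<close> separate the linear and the quadratic term.\<close>
  obtain w :: 'k where w: "w \<noteq> 0" "w \<noteq> 1" using exists_ne_0_1 by blast
  then have "w^2 - w \<noteq> 0" by (simp add: power2_eq_square right_diff_distrib[symmetric])
  then have "B = tsmult (1 / (w^2 - w)) (tsmult w (P 1) - P w)"
    unfolding P_eq by (simp add: vec_eq_iff tsmult_def field_simps)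
  then show B_mem: "B \<in> S" unfolding B_def[symmetric]
    using P_mem by (metis Gsubmodule Gsubmodule_diff Gsubmodule_tsmult)
  have "A = P 1 + B" unfolding P_eq by (simp add: vec_eq_iff tsmult_def)
  then show "A \<in> S" unfolding A_def[symmetric]
    using P_mem B_mem by (metis Gsubmodule Gsubmodule_add)
qed

lemma matrix_unit_mem_of_off_diagonal:
  assumes "X \<in> S" and "a \<noteq> b" and "X$a$b \<noteq> 0"
  shows "matrix_unit b a \<in> S"
proof -
  have "matrix_unit b a = tsmult (1 / X$a$b) (matrix_unit b a ** X ** matrix_unit b a)"
    using assms(3) by (simp add: sandwich_matrix_unit vec_eq_iff tsmult_def)
  then show ?thesis
    using commutator_sandwich_mem(2)[OF assms(1)] assms(2) by (metis Gsubmodule Gsubmodule_tsmult)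
qed

lemma matrix_unit_mem_of_diagonal:
  assumes "X \<in> S" and "a \<noteq> b" and "\<And>p q. p \<noteq> q \<Longrightarrow> X$p$q = 0"
    and "X$a$a \<noteq> X$b$b"
  shows "matrix_unit a b \<in> S"
proof -
  have "matrix_unit a b
      = tsmult (1 / (X$b$b - X$a$a)) (matrix_unit a b ** X - X ** matrix_unit a b)"
    using assms(2-4) by (auto simp: vec_eq_iff tsmult_def matrix_unit_mult_left
        matrix_unit_mult_right matrix_unit_component)
  then show ?thesis
    using commutator_sandwich_mem(1)[OF assms(1,2)] by (metis Gsubmodule Gsubmodule_tsmult)
qed

lemma exists_matrix_unit_mem:
  assumes "X \<in> S" and "X \<notin> span_gamma"
  obtains a b where "a \<noteq> b" and "matrix_unit a b \<in> S"
proof (cases "\<exists>a b. a \<noteq> b \<and> X$a$b \<noteq> 0")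
  case True
  then show thesis using that matrix_unit_mem_of_off_diagonal[OF assms(1)] by metis
next
  case False
  then have diagonal: "\<And>p q. p \<noteq> q \<Longrightarrow> X$p$q = 0" by blast
  obtain a b where "X$a$a \<noteq> X$b$b"
  proof (rule ccontr)
    assume "\<not> thesis"
    then have "X = tsmult (X$m$m) (mat 1)" for m
      using that diagonal by (auto simp: vec_eq_iff tsmult_def mat_def)
    with assms(2) show False unfolding span_gamma_eq by blast
  qed
  then show thesis
    using that matrix_unit_mem_of_diagonal[OF assms(1) _ diagonal] by (metis)
qed

lemma all_matrix_units_mem:
  assumes "matrix_unit a b \<in> S" and "a \<noteq> b" and "p \<noteq> q"
  shows "matrix_unit p q \<in> S"
proof -
  have row_a: "matrix_unit a q \<in> S" if "q \<noteq> a" for q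
  proof (cases "q = b")
    case False
    have "matrix_unit a q = tsmult (-1)
        (matrix_unit b q ** matrix_unit a b - matrix_unit a b ** matrix_unit b q)"
      using that False assms(2) by (simp add: matrix_unit_mult vec_eq_iff tsmult_def)
    then show ?thesis
      using commutator_sandwich_mem(1)[OF assms(1)] False by (metis Gsubmodule Gsubmodule_tsmult)
  qed (use assms in simp)
  consider "p = a" | "q = a" | "p \<noteq> a" "q \<noteq> a" by blast
  then show ?thesis
  proof cases
    case 2
    then show ?thesis
      using matrix_unit_mem_of_off_diagonal[OF row_a] assms(3) by (simp add: matrix_unit_component)
  next
    case 3
    have "matrix_unit p q
        = matrix_unit p a ** matrix_unit a q - matrix_unit a q ** matrix_unit p a"
      using assms(3) by (simp add: matrix_unit_mult)
    then show ?thesis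
      using commutator_sandwich_mem(1)[OF row_a] 3 by metis
  qed (use row_a assms in simp)
qed

lemma trace_zero_mem:
  assumes "\<And>p q. p \<noteq> q \<Longrightarrow> matrix_unit p q \<in> S" and "trace Z = 0"
  shows "Z \<in> S"
proof -
  fix m
  have diagonal: "matrix_unit p p - matrix_unit m m \<in> S" for p
  proof (cases "p = m")
    case False
    have "matrix_unit p p - matrix_unit m m
        = matrix_unit p m ** matrix_unit m p - matrix_unit m p ** matrix_unit p m"
      by (simp add: matrix_unit_mult)
    then show ?thesis using commutator_sandwich_mem(1)[OF assms(1)] False by metis
  qed (simp add: Gsubmodule_zero[OF Gsubmodule])
  show ?thesis
    by (subst trace_zero_decomposition[OF assms(2), of m])
      (intro Gsubmodule_add Gsubmodule_sum Gsubmodule_tsmult Gsubmodule assms(1) diagonal; simp)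
qed

lemma eq_perp_span_gamma:
  assumes "char2 TYPE('k)" and "span_gamma \<subseteq> S" and "S \<subseteq> perp span_gamma"
    and "S \<noteq> span_gamma"
  shows "S = perp span_gamma"
proof
  obtain X where "X \<in> S" "X \<notin> span_gamma" using assms(2,4) by blast
  then obtain a b where "a \<noteq> b" "matrix_unit a b \<in> S" by (rule exists_matrix_unit_mem)
  then have units: "\<And>p q. p \<noteq> q \<Longrightarrow> matrix_unit p q \<in> S"
    by (metis all_matrix_units_mem)
  show "perp span_gamma \<subseteq> S"
  proof
    fix Y :: "'k^'n^'n" assume "Y \<in> perp span_gamma"
    have "trace (Y - tsmult (trace Y) (mat 1)) = trace Y - of_nat CARD('n) * trace Y"
      by (simp add: trace_sub trace_tsmult trace_I mult.commute)
    also have "\<dots> = (1 + of_nat CARD('n)) * trace Y"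
      by (simp only: diff_conv_add_uminus char2_uminus[OF assms(1)] distrib_right mult_1)
    finally have "trace (Y - tsmult (trace Y) (mat 1)) = 0"
      using \<open>Y \<in> perp span_gamma\<close> unfolding perp_span_gamma by simp
    then have "Y - tsmult (trace Y) (mat 1) \<in> S" using trace_zero_mem[OF units] by blast
    moreover have "tsmult (trace Y) (mat 1) \<in> S" using assms(2) unfolding span_gamma_eq by blast
    ultimately show "Y \<in> S" using Gsubmodule_add[OF Gsubmodule] by fastforce
  qed
qed (use assms in blast)

end

subsection \<open>A highest weight vector\<close>

lemma Min_less_Max_UNIV:
  assumes "CARD('n::{finite,linorder}) \<ge> 2"
  shows "Min (UNIV::'n set) < Max UNIV"
proof (rule ccontr)
  assume "\<not> Min (UNIV::'n set) < Max UNIV"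
  then have "Max UNIV \<le> Min (UNIV::'n set)" by (metis not_less)
  moreover have "Min UNIV \<le> x" "x \<le> Max UNIV" for x :: 'n by simp_all
  ultimately have "x = Min UNIV" for x :: 'n by (meson antisym order_trans)
  then have "(UNIV::'n set) = {Min UNIV}" by blast
  then have "CARD('n) = 1" using card_1_singleton_iff by fastforce
  with assms show False by simp
qed

lemma permutes_linorder_ge:
  fixes p :: "'n::{finite,linorder} \<Rightarrow> 'n"
  assumes p: "p permutes UNIV" and ge: "\<And>i. i \<le> p i"
  shows "p = id"
proof (rule ccontr)
  assume "p \<noteq> id"
  then have moved: "{i. p i \<noteq> i} \<noteq> {}" by auto
  define i where "i = Max {i. p i \<noteq> i}"
  have "p i \<noteq> i" using Max_in[OF _ moved] unfolding i_def by auto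
  then have "i < p i" using ge[of i] by simp
  have "p (p i) = p i"
  proof (rule ccontr)
    assume "p (p i) \<noteq> p i"
    then have "p i \<le> i" unfolding i_def by (intro Max_ge) auto
    with \<open>i < p i\<close> show False by simp
  qed
  then have "p i = i" using permutes_inj[OF p] by (metis injD)
  with \<open>p i \<noteq> i\<close> show False by simp
qed

lemma det_upper_triangular:
  fixes A :: "'a::comm_ring_1^'n::{finite,linorder}^'n::{finite,linorder}"
  assumes "\<And>i j. j < i \<Longrightarrow> A$i$j = 0"
  shows "det A = (\<Prod>i\<in>UNIV. A$i$i)"
proof -
  have vanish: "(\<Prod>i\<in>UNIV. A$i$p i) = 0" if p: "p permutes UNIV" and "p \<noteq> id" for p
  proof -
    obtain i where "p i < i" using permutes_linorder_ge[OF p] \<open>p \<noteq> id\<close> by (metis not_le)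
    then have "A$i$p i = 0" by (rule assms)
    then show ?thesis by (intro prod_zero) auto
  qed
  have "det A = (\<Sum>p\<in>{id}. of_int (sign p) * (\<Prod>i\<in>UNIV. A$i$p i))"
    unfolding det_def
    by (rule sum.mono_neutral_right) (auto simp: permutes_id vanish intro: finite_permutations)
  then show ?thesis by (simp add: sign_id)
qed

lemma diagonal_matrix_mult:
  fixes D :: "'a::semiring_1^'n::finite^'n"
  assumes "\<And>i j. i \<noteq> j \<Longrightarrow> D$i$j = 0"
  shows "(D ** X)$p$q = D$p$p * X$p$q" and "(X ** D)$p$q = X$p$q * D$q$q"
proof -
  have "(D ** X)$p$q = (\<Sum>k\<in>UNIV. if k = p then D$p$p * X$p$q else 0)"
    unfolding matrix_matrix_mult_def vec_lambda_beta by (intro sum.cong refl) (auto simp: assms)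
  then show "(D ** X)$p$q = D$p$p * X$p$q" by simp
  have "(X ** D)$p$q = (\<Sum>k\<in>UNIV. if k = q then X$p$q * D$q$q else 0)"
    unfolding matrix_matrix_mult_def vec_lambda_beta by (intro sum.cong refl) (auto simp: assms)
  then show "(X ** D)$p$q = X$p$q * D$q$q" by simp
qed

lemma act_unitri_highest_weight:
  fixes u :: "'k::field^'n::{finite,linorder}^'n::{finite,linorder}"
  assumes "u \<in> unitri" and "Min (UNIV::'n set) < Max UNIV"
  shows "act u (matrix_unit (Min UNIV) (Max UNIV)) = matrix_unit (Min UNIV) (Max UNIV)"
proof -
  let ?v = "matrix_unit (Min UNIV) (Max UNIV) :: 'k^'n::{finite,linorder}^'n::{finite,linorder}"
  have diag: "u$i$i = 1" and lower: "\<And>j. j < i \<Longrightarrow> u$i$j = 0" for i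
    using assms(1) unfolding unitri_def by auto
  have "det u \<noteq> 0" by (simp add: det_upper_triangular lower diag)
  then obtain h where h: "u ** h = mat 1" by (rule obtain_inverse_det_nonzero)
  have column: "u$p$(Min UNIV) = (if p = Min UNIV then 1 else 0)" for p
  proof (cases "p = Min UNIV")
    case False
    then have "Min UNIV < p" by (auto simp: order_less_le)
    then show ?thesis using lower False by simp
  qed (simp add: diag)
  have uv: "u ** ?v = ?v"
    by (simp add: vec_eq_iff matrix_unit_mult_right matrix_unit_component column)
  have row: "u$(Max UNIV)$q = (if q = Max UNIV then 1 else 0)" for q
  proof (cases "q = Max UNIV")
    case False
    then have "q < Max UNIV" by (auto simp: order_less_le)
    then show ?thesis using lower False by simp
  qed (simp add: diag)
  have vu: "?v ** u = ?v"
    by (simp add: vec_eq_iff matrix_unit_mult_left matrix_unit_component row)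
  have "act u ?v = (?v ** u) ** h" unfolding act_eq_conj[OF h] uv vu ..
  also have "\<dots> = ?v" by (simp flip: matrix_mul_assoc add: h)
  finally show ?thesis .
qed

lemma act_torus_matrix_unit:
  fixes t :: "'k::field^'n::finite^'n"
  assumes "t \<in> torus"
  shows "act t (matrix_unit a b) = tsmult (t$a$a * inverse (t$b$b)) (matrix_unit a b)"
proof -
  have off_diagonal: "t$p$q = 0" if "p \<noteq> q" for p q
    using assms that unfolding torus_def by auto
  have "(\<Prod>i\<in>UNIV. t$i$i) = det t" by (rule det_diagonal[symmetric]) (rule off_diagonal)
  also have "\<dots> = 1" using assms unfolding torus_def SL_def by simp
  finally have "(\<Prod>i\<in>UNIV. t$i$i) = 1" .
  then have nonzero: "t$i$i \<noteq> 0" for i by (metis UNIV_I finite prod_zero_iff zero_neq_one)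
  define h :: "'k^'n^'n" where "h = (\<chi> p q. if p = q then inverse (t$p$p) else 0)"
  note t_mult = diagonal_matrix_mult(1)[of t, OF off_diagonal]
  have "t ** h = mat 1" by (simp add: vec_eq_iff t_mult h_def mat_def nonzero)
  moreover have "t ** matrix_unit a b = tsmult (t$a$a) (matrix_unit a b)"
    by (simp add: vec_eq_iff t_mult matrix_unit_component tsmult_def)
  moreover have "matrix_unit a b ** h = tsmult (inverse (t$b$b)) (matrix_unit a b)"
    using diagonal_matrix_mult(2)[of h] by (auto simp: vec_eq_iff matrix_unit_component tsmult_def h_def)
  ultimately show ?thesis
    by (simp add: act_eq_conj tsmult_mult flip: matrix_mul_assoc)
      (simp add: vec_eq_iff tsmult_def mult.commute)
qed

lemma span_gamma_subset_perp:
  assumes "char2 TYPE('k::field)"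
  shows "(span_gamma :: ('k^'n::finite^'n) set) \<subseteq> perp span_gamma"
proof
  fix X :: "'k^'n^'n" assume "X \<in> span_gamma"
  then obtain c where "X = tsmult c (mat 1)" unfolding span_gamma_eq by blast
  then have "(1 + of_nat CARD('n)) * trace X = c * of_nat (CARD('n) * Suc CARD('n))"
    by (simp add: trace_tsmult trace_I algebra_simps)
  also have "\<dots> = 0" by (simp add: char2_of_nat[OF assms])
  finally show "X \<in> perp span_gamma" unfolding perp_span_gamma by simp
qed

lemma subquot_is_L_perp_span_gamma:
  assumes "char2 TYPE('k::field)" and "\<exists>w::'k. w \<noteq> 0 \<and> w \<noteq> 1"
    and "CARD('n::{finite,linorder}) \<ge> 2"
  shows "subquot_is_L (span_gamma :: ('k^'n::{finite,linorder}^'n::{finite,linorder}) set)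
    (perp span_gamma) weight_w1_wn1" (is "subquot_is_L ?U ?W _")
proof -
  let ?v = "matrix_unit (Min UNIV) (Max UNIV) :: 'k^'n::{finite,linorder}^'n::{finite,linorder}"
  have Min_Max: "Min (UNIV::'n set) < Max UNIV" by (rule Min_less_Max_UNIV[OF assms(3)])
  have "Gsubmodule ?W" unfolding perp_span_gamma by (rule Gsubmodule_trace_kernel)
  have "?v \<in> ?W" using Min_Max by (simp add: perp_span_gamma trace_matrix_unit)
  have "?v \<notin> ?U"
  proof
    assume "?v \<in> ?U"
    then obtain c where "?v = tsmult c (mat 1)" unfolding span_gamma_eq by blast
    then have "?v $ Min UNIV $ Max UNIV = 0" using Min_Max by (simp add: tsmult_def mat_def)
    then show False by (simp add: matrix_unit_component)
  qed
  have irreducible: "S = ?U \<or> S = ?W" if S: "Gsubmodule S" "?U \<subseteq> S" "S \<subseteq> ?W" for S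
  proof -
    interpret SL_submodule S using S(1) assms(2) by unfold_locales
    show ?thesis using eq_perp_span_gamma[OF assms(1)] S by blast
  qed
  have "0 \<in> ?U" by (rule Gsubmodule_zero[OF Gsubmodule_span_gamma])
  then have "act u ?v - ?v \<in> ?U" if "u \<in> unitri" for u
    using that by (simp add: act_unitri_highest_weight Min_Max)
  moreover have "act t ?v - tsmult (weight_w1_wn1 t) ?v \<in> ?U" if "t \<in> torus" for t
    using that \<open>0 \<in> ?U\<close> by (simp add: act_torus_matrix_unit weight_w1_wn1_def)
  ultimately show ?thesis
    unfolding subquot_is_L_def
    using Gsubmodule_span_gamma \<open>Gsubmodule ?W\<close> span_gamma_subset_perp[OF assms(1)]
      \<open>?v \<in> ?W\<close> \<open>?v \<notin> ?U\<close> irreducible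
    by blast
qed

lemma bV_even_dimension_char2:
  assumes "char2 TYPE('k::field)" and "even CARD('n::finite)"
  shows "(\<forall>X::'k^'n^'n. (\<forall>Y. bV X Y = 0) \<longrightarrow> X = 0)
    \<and> {X::'k^'n^'n. psiV X = 0} = perp span_gamma"
  using bV_nondegenerate_even[OF assms] ker_psiV_eq_perp_even[OF assms] by blast

lemma bV_odd_dimension_char2:
  assumes "char2 TYPE('k::field)" and "odd CARD('n::finite)"
  shows "(radical :: ('k^'n^'n) set) = span_gamma
    \<and> {X::'k^'n^'n. psiV X = 0} \<inter> span_gamma = {0}
    \<and> (\<forall>Z::'k^'n^'n. \<exists>X Y. psiV X = 0 \<and> Y \<in> span_gamma \<and> Z = X + Y)"
  using radical_eq_span_gamma_odd[OF assms] ker_psiV_inter_span_gamma_odd[OF assms]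
    ker_psiV_plus_span_gamma_odd[OF assms] by blast

theorem lemma8p1:
  assumes "char2 TYPE('k::field)" and "alg_closed TYPE('k)"
    and "CARD('n::{finite,linorder}) \<ge> 2"
  shows "(\<forall>X::'k^'n::{finite,linorder}^'n::{finite,linorder}. bV X X = 0)
    \<and> (even CARD('n::{finite,linorder}) \<longrightarrow>
         (\<forall>X::'k^'n::{finite,linorder}^'n::{finite,linorder}. (\<forall>Y. bV X Y = 0) \<longrightarrow> X = 0) \<and>
         {X::'k^'n::{finite,linorder}^'n::{finite,linorder}. psiV X = 0} = perp span_gamma)
    \<and> (odd CARD('n::{finite,linorder}) \<longrightarrow>
         (radical :: ('k^'n::{finite,linorder}^'n::{finite,linorder}) set) = span_gamma \<and>
         {X::'k^'n::{finite,linorder}^'n::{finite,linorder}. psiV X = 0} \<inter> span_gamma = {0} \<and>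
         (\<forall>Z::'k^'n::{finite,linorder}^'n::{finite,linorder}. \<exists>X Y. psiV X = 0 \<and> Y \<in> span_gamma \<and> Z = X + Y))
    \<and> subquot_is_L (span_gamma :: ('k^'n::{finite,linorder}^'n::{finite,linorder}) set) (perp span_gamma) weight_w1_wn1"
proof -
  obtain w :: 'k where "w \<noteq> 0" "w \<noteq> 1" by (rule alg_closed_exists_ne_0_1[OF assms(2)])
  then have "\<exists>w::'k. w \<noteq> 0 \<and> w \<noteq> 1" by blast
  then show ?thesis
    by (intro bV_even_dimension_char2 bV_odd_dimension_char2 subquot_is_L_perp_span_gamma allI[OF bV_self_char2]
        assms(1,3) conjI impI)
qed

end
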